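(* Let $\Omega\subset\mathbb{C}^n$ be a bounded domain, let $\mathcal R$ and $\mathcal R'$ be finite rank quasi-free Hilbert modules over $A(\Omega)$, and let $X:\mathcal R\to\mathcal R'$ be a module map. For each integer $k\ge0$ let $\Sigma_k=\{z\in\Omega:\operatorname{rank}(X\otimes_{A(\Omega)}1_z)=k\}$. Then the sets $\Sigma_k$ are analytic subvarieties of $\Omega$.
   Context: $A(\Omega)$ is the closure, in the supremum norm on $\Omega$, of the set of functions holomorphic on some neighbourhood of $\overline\Omega$; $\ell^2_m$ is the $m$-dimensional Hilbert space. A quasi-free Hilbert module of rank $m$ ($m$ finite) over $A(\Omega)$ is a Hilbert space $\mathcal R$ obtained as the completion of $A(\Omega)\otimes\ell^2_m$ (regarded as $\ell^2_m$-valued holomorphic functions on $\Omega$) with respect to an inner product such that: (1) for each $z\in\Omega$ evaluation at $z$ into $\ell^2_m$ is bounded, with norm locally uniformly bounded in $z$; (2) $\|\varphi F\|_{\mathcal R}\le\|\varphi\|_{A(\Omega)}\|F\|_{\mathcal R}$; (3) if $(F_i)$ is Cauchy in $\mathcal R$-norm, then $F_i(z)\to0$ for all $z$ iff $\|F_i\|_{\mathcal R}\to0$. $A(\Omega)$ acts by multiplication. A module map is a bounded linear map $X$ with $X(\varphi h)=\varphi X(h)$. For $z\in\Omega$, $\mathbb C_z$ is $\mathbb C$ with action $\varphi\cdot\lambda=\varphi(z)\lambda$; the localization $\mathcal R\otimes_{A(\Omega)}\mathbb C_z$ is identified with $\mathcal R/\mathcal R_z$, $\mathcal R_z$ the closure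 of $\{\varphi h:\varphi\in A(\Omega),\varphi(z)=0,h\in\mathcal R\}$, and $X\otimes_{A(\Omega)}1_z:\mathcal R\otimes_{A(\Omega)}\mathbb C_z\to\mathcal R'\otimes_{A(\Omega)}\mathbb C_z$ is the induced map $h\otimes1_z\mapsto Xh\otimes1_z$. *)

theory Defs
  imports "HOL-Analysis.Analysis"
begin

text \<open>Points of C^n are vectors of type complex^'n; l^2_m is complex^'m
  (the library norm on vectors is the Euclidean/l^2 norm).\<close>

definition holo_on :: "(complex^'n \<Rightarrow> complex) \<Rightarrow> (complex^'n) set \<Rightarrow> bool" where
  "holo_on f U \<longleftrightarrow> (\<forall>z\<in>U. \<exists>D. (f has_derivative D) (at z) \<and> (\<forall>c v. D (c *s v) = c * D v))"

definition bounded_domain :: "(complex^'n) set \<Rightarrow> bool" where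
  "bounded_domain \<Omega> \<longleftrightarrow> open \<Omega> \<and> connected \<Omega> \<and> \<Omega> \<noteq> {} \<and> bounded \<Omega>"

text \<open>A(Omega): sup-norm closure on Omega of functions holomorphic on a neighbourhood
  of the closure of Omega (functions are taken to vanish off Omega).\<close>
definition A_alg :: "(complex^'n) set \<Rightarrow> (complex^'n \<Rightarrow> complex) set" where
  "A_alg \<Omega> = {\<phi>. (\<forall>z. z \<notin> \<Omega> \<longrightarrow> \<phi> z = 0) \<and>
      (\<forall>\<epsilon>>0. \<exists>g U. open U \<and> closure \<Omega> \<subseteq> U \<and> holo_on g U \<and> (\<forall>z\<in>\<Omega>. norm (\<phi> z - g z) < \<epsilon>))}"

definition sup_norm :: "(complex^'n) set \<Rightarrow> (complex^'n \<Rightarrow> complex) \<Rightarrow> real" where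
  "sup_norm \<Omega> \<phi> = (SUP z\<in>\<Omega>. norm (\<phi> z))"

definition mult :: "(complex^'n \<Rightarrow> complex) \<Rightarrow> (complex^'n \<Rightarrow> complex^'m) \<Rightarrow> (complex^'n \<Rightarrow> complex^'m)" where
  "mult \<phi> F = (\<lambda>z. \<phi> z *s F z)"

text \<open>A(Omega) tensor l^2_m, as l^2_m-valued functions.\<close>
definition A_tensor :: "(complex^'n) set \<Rightarrow> (complex^'n \<Rightarrow> complex^'m) set" where
  "A_tensor \<Omega> = {F. \<forall>j. (\<lambda>z. F z $ j) \<in> A_alg \<Omega>}"

definition hnorm :: "(('n \<Rightarrow> 'v) \<Rightarrow> ('n \<Rightarrow> 'v) \<Rightarrow> complex) \<Rightarrow> ('n \<Rightarrow> 'v) \<Rightarrow> real" where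
  "hnorm ip F = sqrt (Re (ip F F))"

text \<open>Quasi-free Hilbert module of rank CARD('m) over A(Omega), realised as a Hilbert space H
  of l^2_m-valued functions on Omega (vanishing off Omega) with inner product ip
  (linear in the first argument).\<close>
definition quasi_free ::
  "(complex^'n) set \<Rightarrow> (complex^'n \<Rightarrow> complex^'m) set \<Rightarrow>
   ((complex^'n \<Rightarrow> complex^'m) \<Rightarrow> (complex^'n \<Rightarrow> complex^'m) \<Rightarrow> complex) \<Rightarrow> bool" where
  "quasi_free \<Omega> H ip \<longleftrightarrow>
    (\<lambda>z. 0) \<in> H \<and>
    (\<forall>F\<in>H. \<forall>G\<in>H. \<forall>c. (\<lambda>z. c *s F z + G z) \<in> H) \<and>
    (\<forall>F\<in>H. \<forall>z. z \<notin> \<Omega> \<longrightarrow> F z = 0) \<and>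
    (\<forall>F\<in>H. \<forall>G\<in>H. \<forall>K\<in>H. \<forall>c. ip (\<lambda>z. c *s F z + G z) K = c * ip F K + ip G K) \<and>
    (\<forall>F\<in>H. \<forall>G\<in>H. ip F G = cnj (ip G F)) \<and>
    (\<forall>F\<in>H. Re (ip F F) \<ge> 0 \<and> (ip F F = 0 \<longrightarrow> F = (\<lambda>z. 0))) \<and>
    (\<forall>S. (\<forall>i. S i \<in> H) \<and> (\<forall>\<epsilon>>0. \<exists>N. \<forall>i\<ge>N. \<forall>j\<ge>N. hnorm ip (\<lambda>z. S i z - S j z) < \<epsilon>)
         \<longrightarrow> (\<exists>F\<in>H. (\<lambda>i. hnorm ip (\<lambda>z. S i z - F z)) \<longlonglongrightarrow> 0)) \<and>
    A_tensor \<Omega> \<subseteq> H \<and>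
    (\<forall>F\<in>H. \<forall>\<epsilon>>0. \<exists>G\<in>A_tensor \<Omega>. hnorm ip (\<lambda>z. F z - G z) < \<epsilon>) \<and>
    (\<forall>z\<in>\<Omega>. \<exists>r>0. \<exists>C. \<forall>w\<in>ball z r \<inter> \<Omega>. \<forall>F\<in>H. norm (F w) \<le> C * hnorm ip F) \<and>
    (\<forall>\<phi>\<in>A_alg \<Omega>. \<forall>F\<in>H. mult \<phi> F \<in> H \<and> hnorm ip (mult \<phi> F) \<le> sup_norm \<Omega> \<phi> * hnorm ip F) \<and>
    (\<forall>S. (\<forall>i. S i \<in> H) \<and> (\<forall>\<epsilon>>0. \<exists>N. \<forall>i\<ge>N. \<forall>j\<ge>N. hnorm ip (\<lambda>z. S i z - S j z) < \<epsilon>)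
         \<longrightarrow> ((\<forall>z\<in>\<Omega>. (\<lambda>i. S i z) \<longlonglongrightarrow> 0) \<longleftrightarrow> (\<lambda>i. hnorm ip (S i)) \<longlonglongrightarrow> 0))"

definition module_map ::
  "(complex^'n) set \<Rightarrow> (complex^'n \<Rightarrow> complex^'m) set \<Rightarrow>
   ((complex^'n \<Rightarrow> complex^'m) \<Rightarrow> (complex^'n \<Rightarrow> complex^'m) \<Rightarrow> complex) \<Rightarrow>
   (complex^'n \<Rightarrow> complex^'p) set \<Rightarrow>
   ((complex^'n \<Rightarrow> complex^'p) \<Rightarrow> (complex^'n \<Rightarrow> complex^'p) \<Rightarrow> complex) \<Rightarrow>
   ((complex^'n \<Rightarrow> complex^'m) \<Rightarrow> (complex^'n \<Rightarrow> complex^'p)) \<Rightarrow> bool" where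
  "module_map \<Omega> H ip H' ip' X \<longleftrightarrow>
    (\<forall>F\<in>H. X F \<in> H') \<and>
    (\<forall>F\<in>H. \<forall>G\<in>H. \<forall>c. X (\<lambda>z. c *s F z + G z) = (\<lambda>z. c *s X F z + X G z)) \<and>
    (\<exists>C. \<forall>F\<in>H. hnorm ip' (X F) \<le> C * hnorm ip F) \<and>
    (\<forall>\<phi>\<in>A_alg \<Omega>. \<forall>F\<in>H. X (mult \<phi> F) = mult \<phi> (X F))"

text \<open>R_z: closure of the span of {phi h : phi in A(Omega), phi z = 0, h in R}.\<close>
definition loc_sub ::
  "(complex^'n) set \<Rightarrow> (complex^'n \<Rightarrow> complex^'m) set \<Rightarrow>
   ((complex^'n \<Rightarrow> complex^'m) \<Rightarrow> (complex^'n \<Rightarrow> complex^'m) \<Rightarrow> complex) \<Rightarrow>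
   complex^'n \<Rightarrow> (complex^'n \<Rightarrow> complex^'m) set" where
  "loc_sub \<Omega> H ip z = {G\<in>H. \<forall>\<epsilon>>0. \<exists>(n::nat) \<phi> h.
      (\<forall>i<n. \<phi> i \<in> A_alg \<Omega> \<and> \<phi> i z = 0 \<and> h i \<in> H) \<and>
      hnorm ip (\<lambda>w. G w - (\<Sum>i<n. mult (\<phi> i) (h i) w)) < \<epsilon>}"

text \<open>Rank of X tensor 1_z : R/R_z \<rightarrow> R'/R'_z, i.e. the dimension of its image
  {Xh + R'_z}, i.e. the maximal number of vectors X h_i linearly independent modulo R'_z.\<close>
definition loc_rank ::
  "(complex^'n) set \<Rightarrow> (complex^'n \<Rightarrow> complex^'m) set \<Rightarrow>
   (complex^'n \<Rightarrow> complex^'p) set \<Rightarrow>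
   ((complex^'n \<Rightarrow> complex^'p) \<Rightarrow> (complex^'n \<Rightarrow> complex^'p) \<Rightarrow> complex) \<Rightarrow>
   ((complex^'n \<Rightarrow> complex^'m) \<Rightarrow> (complex^'n \<Rightarrow> complex^'p)) \<Rightarrow> complex^'n \<Rightarrow> nat" where
  "loc_rank \<Omega> H H' ip' X z = (GREATEST k. \<exists>h. (\<forall>i<k. h i \<in> H) \<and>
      (\<forall>c. (\<lambda>w. \<Sum>i<k. c i *s X (h i) w) \<in> loc_sub \<Omega> H' ip' z \<longrightarrow> (\<forall>i<k. c i = 0)))"

definition analytic_subvariety :: "(complex^'n) set \<Rightarrow> (complex^'n) set \<Rightarrow> bool" where
  "analytic_subvariety \<Omega> V \<longleftrightarrow> V \<subseteq> \<Omega> \<and>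
    (\<forall>p\<in>V. \<exists>U. open U \<and> p \<in> U \<and> U \<subseteq> \<Omega> \<and>
       (\<exists>(N::nat) f. (\<forall>i<N. holo_on (f i) U) \<and> V \<inter> U = {w\<in>U. \<forall>i<N. f i w = 0}))"

end

theory Submission
  imports Defs "HOL-Complex_Analysis.Cauchy_Integral_Formula"
begin

text \<open>Evaluation at \<open>z\<close> identifies the localisation \<open>\<R> \<otimes> \<complex>\<^sub>z\<close> with the fibre \<open>\<ell>\<^sup>2\<^sub>m\<close>:
  since evaluation is bounded and \<open>A(\<Omega>) \<otimes> \<ell>\<^sup>2\<^sub>m\<close> is dense, \<open>\<R>\<^sub>z\<close> consists exactly of the
  sections vanishing at \<open>z\<close>. Then \<open>X \<otimes> 1\<^sub>z\<close> is the matrix of values at \<open>z\<close> of \<open>X\<close> applied to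
  the constant sections, and its entries are holomorphic in \<open>z\<close>, being locally uniform limits
  of holomorphic functions. So the rank exceeds \<open>k\<close> exactly where one of finitely many
  holomorphic determinants is nonzero; as the rank is lower semicontinuous, near a point of
  \<open>\<Sigma>\<^sub>k\<close> the set \<open>\<Sigma>\<^sub>k\<close> is the common zero set of these determinants.\<close>

section \<open>Holomorphic functions of several variables\<close>

lemma holo_on_subset: "holo_on f U \<Longrightarrow> V \<subseteq> U \<Longrightarrow> holo_on f V"
  unfolding holo_on_def by blast

lemma holo_on_const [simp]: "holo_on (\<lambda>z. c) U"
  unfolding holo_on_def by (auto intro!: exI[of _ "\<lambda>v. 0"])

lemma holo_on_add:
  assumes "holo_on f U" and "holo_on g U"
  shows "holo_on (\<lambda>z. f z + g z) U"
  unfolding holo_on_def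
proof
  fix z assume "z \<in> U"
  then obtain D E where "(f has_derivative D) (at z)" "\<forall>c v. D (c *s v) = c * D v"
    "(g has_derivative E) (at z)" "\<forall>c v. E (c *s v) = c * E v"
    using assms unfolding holo_on_def by blast
  then show "\<exists>D. ((\<lambda>z. f z + g z) has_derivative D) (at z) \<and> (\<forall>c v. D (c *s v) = c * D v)"
    by (intro exI[of _ "\<lambda>v. D v + E v"]) (auto intro!: has_derivative_add simp: algebra_simps)
qed

lemma holo_on_mult:
  assumes "holo_on f U" and "holo_on g U"
  shows "holo_on (\<lambda>z. f z * g z) U"
  unfolding holo_on_def
proof
  fix z assume "z \<in> U"
  then obtain D E where "(f has_derivative D) (at z)" "\<forall>c v. D (c *s v) = c * D v"
    "(g has_derivative E) (at z)" "\<forall>c v. E (c *s v) = c * E v"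
    using assms unfolding holo_on_def by blast
  then show "\<exists>D. ((\<lambda>z. f z * g z) has_derivative D) (at z) \<and> (\<forall>c v. D (c *s v) = c * D v)"
    by (intro exI[of _ "\<lambda>v. f z * E v + D v * g z"] conjI has_derivative_mult) (auto simp: algebra_simps)
qed

lemma holo_on_sum:
  "finite I \<Longrightarrow> (\<And>i. i \<in> I \<Longrightarrow> holo_on (f i) U) \<Longrightarrow> holo_on (\<lambda>z. \<Sum>i\<in>I. f i z) U"
  by (induction I rule: finite_induct) (auto intro: holo_on_add)

lemma holo_on_prod:
  "finite I \<Longrightarrow> (\<And>i. i \<in> I \<Longrightarrow> holo_on (f i) U) \<Longrightarrow> holo_on (\<lambda>z. \<Prod>i\<in>I. f i z) U"
  by (induction I rule: finite_induct) (auto intro: holo_on_mult)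

lemma holo_on_det:
  "(\<And>i j. holo_on (\<lambda>z. A z $ i $ j) U) \<Longrightarrow> holo_on (\<lambda>z. det (A z)) U"
  unfolding det_def by (intro holo_on_sum holo_on_mult holo_on_prod finite_permutations) auto

lemma holo_on_continuous_on: "holo_on f U \<Longrightarrow> continuous_on U f"
  unfolding holo_on_def
  by (meson continuous_at_imp_continuous_on has_derivative_continuous)

lemma norm_axis: "norm (axis i (t::'a::real_normed_field)) = norm t"
proof -
  have "(\<Sum>j\<in>UNIV. (norm (axis i t $ j))\<^sup>2) = (norm t)\<^sup>2"
    by (subst sum.remove[of _ i]) (auto simp: axis_def)
  then show ?thesis by (simp add: norm_vec_def L2_set_def)
qed

lemma norm_vector_smult: "norm (c *s x) = norm c * norm (x :: 'a::real_normed_field^'n)"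
proof -
  have "norm (c *s x) = L2_set (\<lambda>i. norm c * norm (x $ i)) UNIV"
    by (simp add: norm_vec_def norm_mult)
  also have "\<dots> = norm c * norm x"
    unfolding norm_vec_def by (rule L2_set_right_distrib[symmetric]) simp
  finally show ?thesis .
qed

lemma coordinate_line_in_ball:
  fixes x :: "'a::real_normed_field^'n"
  assumes "x \<in> ball z (R/2)" and "norm s < R/2"
  shows "x + axis i s \<in> ball z R"
proof -
  have "dist z (x + axis i s) \<le> dist z x + norm (axis i s)"
    by (metis dist_norm dist_triangle2 add_diff_cancel_left' norm_minus_commute)
  then show ?thesis using assms by (simp add: norm_axis)
qed

definition partial_deriv :: "(complex^'n \<Rightarrow> complex) \<Rightarrow> 'n \<Rightarrow> complex^'n \<Rightarrow> complex" where
  "partial_deriv f i x = deriv (\<lambda>s. f (x + axis i s)) 0"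

lemma has_field_derivative_coordinate_line:
  fixes x :: "complex^'n"
  assumes "(f has_derivative D) (at (x + axis i t))" and "\<forall>c v. D (c *s v) = c * D v"
  shows "((\<lambda>s. f (x + axis i s)) has_field_derivative D (axis i 1)) (at t)"
proof -
  have "bounded_linear (\<lambda>s::complex. axis i s :: complex^'n)"
    by (rule bounded_linear_intro[where K=1]) (auto simp: norm_axis, auto simp: axis_def vec_eq_iff)
  then have "((\<lambda>s. x + axis i s) has_derivative (\<lambda>s. axis i s)) (at t)"
    using has_derivative_add[OF has_derivative_const[of x] bounded_linear_imp_has_derivative]
    by (simp only: add_0_left)
  from has_derivative_compose[OF this assms(1)]
  have "((\<lambda>s. f (x + axis i s)) has_derivative (\<lambda>s. D (axis i s))) (at t)" .
  moreover have "(\<lambda>s. D (axis i s)) = (*) (D (axis i 1))"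
  proof
    fix s :: complex
    have "axis i s = s *s axis i 1" by (simp add: axis_def vec_eq_iff)
    then show "D (axis i s) = D (axis i 1) * s" using assms(2) by (simp add: mult.commute)
  qed
  ultimately show ?thesis
    unfolding has_field_derivative_def by simp
qed

lemma holomorphic_on_coordinate_line:
  assumes "holo_on f U"
  shows "(\<lambda>s. f (x + axis i s)) holomorphic_on {s. x + axis i s \<in> U}"
  unfolding holomorphic_on_def
proof
  fix t assume "t \<in> {s. x + axis i s \<in> U}"
  then obtain D where "(f has_derivative D) (at (x + axis i t))" "\<forall>c v. D (c *s v) = c * D v"
    using assms unfolding holo_on_def by blast
  then show "(\<lambda>s. f (x + axis i s)) field_differentiable at t within {s. x + axis i s \<in> U}"
    using has_field_derivative_coordinate_line field_differentiable_at_within field_differentiable_def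
    by blast
qed

lemma holo_on_has_derivative_partials:
  fixes f :: "complex^'n \<Rightarrow> complex"
  assumes "holo_on f U" and "x \<in> U"
  shows "(f has_derivative (\<lambda>h. \<Sum>i\<in>UNIV. h $ i * partial_deriv f i x)) (at x)"
proof -
  obtain D where D: "(f has_derivative D) (at x)" "\<forall>c v. D (c *s v) = c * D v"
    using assms unfolding holo_on_def by blast
  have partial: "partial_deriv f i x = D (axis i 1)" for i
  proof -
    have "x + axis i 0 = x" by (simp add: axis_def vec_eq_iff)
    then have "(f has_derivative D) (at (x + axis i 0))" using D(1) by (simp only:)
    then have "((\<lambda>s. f (x + axis i s)) has_field_derivative D (axis i 1)) (at 0)"
      using has_field_derivative_coordinate_line D(2) by blast
    then show ?thesis unfolding partial_deriv_def by (rule DERIV_imp_deriv)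
  qed
  have "D = (\<lambda>h. \<Sum>i\<in>UNIV. h $ i * partial_deriv f i x)"
  proof
    fix h
    have "D h = D (\<Sum>i\<in>UNIV. h $ i *s axis i 1)" by (simp add: basis_expansion)
    also have "\<dots> = (\<Sum>i\<in>UNIV. h $ i * D (axis i 1))"
      by (simp only: linear_sum[OF has_derivative_linear[OF D(1)]] D(2)[rule_format])
    finally show "D h = (\<Sum>i\<in>UNIV. h $ i * partial_deriv f i x)" by (simp add: partial)
  qed
  then show ?thesis using D(1) by simp
qed

lemma partial_deriv_diff_le:
  assumes "(\<lambda>s. \<phi> (x + axis i s)) holomorphic_on ball 0 r"
    and "(\<lambda>s. \<psi> (x + axis i s)) holomorphic_on ball 0 r"
    and "0 < \<rho>" and "\<rho> < r"
    and "\<And>s. norm s = \<rho> \<Longrightarrow> norm (\<phi> (x + axis i s) - \<psi> (x + axis i s)) \<le> e"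
  shows "norm (partial_deriv \<phi> i x - partial_deriv \<psi> i x) \<le> e / \<rho>"
proof -
  let ?d = "\<lambda>s. \<phi> (x + axis i s) - \<psi> (x + axis i s)"
  have d: "?d holomorphic_on ball 0 r" using assms(1,2) by (intro holomorphic_intros)
  have "cball 0 \<rho> \<subseteq> ball 0 r" using assms(4) by auto
  then have dc: "?d holomorphic_on cball 0 \<rho>" using holomorphic_on_subset[OF d] by blast
  have "norm ((deriv ^^ 1) ?d 0) \<le> fact 1 * e / \<rho> ^ 1"
  proof (rule Cauchy_inequality)
    show "?d holomorphic_on ball 0 \<rho>" using holomorphic_on_subset[OF dc ball_subset_cball] .
    show "continuous_on (cball 0 \<rho>) ?d" using holomorphic_on_imp_continuous_on[OF dc] .
  qed (use assms(3,5) in auto)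
  moreover have "deriv ?d 0 = partial_deriv \<phi> i x - partial_deriv \<psi> i x"
  proof -
    have "0 \<in> ball (0::complex) r" using assms(3,4) by simp
    then show ?thesis
      unfolding partial_deriv_def
      using holomorphic_on_imp_differentiable_at[OF assms(1) open_ball]
        holomorphic_on_imp_differentiable_at[OF assms(2) open_ball]
      by (intro deriv_diff) auto
  qed
  ultimately show ?thesis by simp
qed

lemma holomorphic_on_coordinate_line_uniform_limit:
  assumes holo: "\<And>n. holo_on (f n) (ball z R)"
    and lim: "uniform_limit (ball z R) f g sequentially"
    and x: "x \<in> ball z (R/2)"
  shows "(\<lambda>s. g (x + axis i s)) holomorphic_on ball 0 (R/2)"
proof (rule holomorphic_uniform_sequence[where f = "\<lambda>n s. f n (x + axis i s)"])
  have line: "ball 0 (R/2) \<subseteq> {s. x + axis i s \<in> ball z R}"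
    using coordinate_line_in_ball[OF x] by auto
  show "(\<lambda>s. f n (x + axis i s)) holomorphic_on ball 0 (R/2)" for n
    using holomorphic_on_subset[OF holomorphic_on_coordinate_line[OF holo] line] .
  show "\<exists>d>0. cball t d \<subseteq> ball 0 (R/2) \<and>
      uniform_limit (cball t d) (\<lambda>n s. f n (x + axis i s)) (\<lambda>s. g (x + axis i s)) sequentially"
    if t: "t \<in> ball 0 (R/2)" for t
  proof -
    obtain d where d: "d > 0" "cball t d \<subseteq> ball 0 (R/2)"
      using t open_contains_cball_eq[OF open_ball[of 0 "R/2"]] by blast
    then have "(\<lambda>s. x + axis i s) \<in> cball t d \<rightarrow> ball z R"
      using line by blast
    then show ?thesis using uniform_limit_compose'[OF lim] d by blast
  qed
qed simp

lemma partial_deriv_uniform_limit: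
  assumes R: "R > 0" and holo: "\<And>n. holo_on (f n) (ball z R)"
    and lim: "uniform_limit (ball z R) f g sequentially" and "e > 0"
  shows "\<forall>\<^sub>F n in sequentially. \<forall>x\<in>ball z (R/2). \<forall>i.
           norm (partial_deriv (f n) i x - partial_deriv g i x) \<le> 4 * e / R"
  using uniform_limitD[OF lim \<open>e > 0\<close>]
proof eventually_elim
  case (elim n)
  show ?case
  proof (intro ballI allI)
    fix x i assume x: "x \<in> ball z (R/2)"
    have line: "ball 0 (R/2) \<subseteq> {s. x + axis i s \<in> ball z R}"
      using coordinate_line_in_ball[OF x] by auto
    have "norm (partial_deriv (f n) i x - partial_deriv g i x) \<le> e / (R/4)"
    proof (rule partial_deriv_diff_le)
      show "(\<lambda>s. f n (x + axis i s)) holomorphic_on ball 0 (R/2)"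
        using holomorphic_on_subset[OF holomorphic_on_coordinate_line[OF holo] line] .
      show "(\<lambda>s. g (x + axis i s)) holomorphic_on ball 0 (R/2)"
        using holomorphic_on_coordinate_line_uniform_limit[OF holo lim x] .
      show "norm (f n (x + axis i s) - g (x + axis i s)) \<le> e" if "norm s = R/4" for s
      proof -
        have "s \<in> ball 0 (R/2)" using that R by simp
        then have "x + axis i s \<in> ball z R" using line by blast
        then show ?thesis using elim by (auto simp: dist_norm less_imp_le)
      qed
    qed (use R in auto)
    then show "norm (partial_deriv (f n) i x - partial_deriv g i x) \<le> 4 * e / R"
      by (simp add: mult.commute)
  qed
qed

lemma norm_sum_coordinates_diff_le:
  fixes a b :: "'n::finite \<Rightarrow> complex" and d :: real
  assumes "\<And>i. norm (a i - b i) \<le> d"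
  shows "norm ((\<Sum>i\<in>UNIV. h $ i * a i) - (\<Sum>i\<in>UNIV. h $ i * b i)) \<le> real CARD('n) * d * norm h"
proof -
  have "norm ((\<Sum>i\<in>UNIV. h $ i * a i) - (\<Sum>i\<in>UNIV. h $ i * b i)) = norm (\<Sum>i\<in>UNIV. h $ i * (a i - b i))"
    by (simp add: algebra_simps sum_subtractf)
  also have "\<dots> \<le> (\<Sum>i\<in>(UNIV::'n set). norm h * d)"
  proof (rule sum_norm_le)
    fix i
    show "norm (h $ i * (a i - b i)) \<le> norm h * d"
      unfolding norm_mult
      using Finite_Cartesian_Product.norm_nth_le[of h i] assms[of i] by (rule mult_mono) auto
  qed
  finally show ?thesis by (simp add: mult.commute mult.left_commute)
qed

text \<open>Cauchy estimates on coordinate lines make the partial derivatives converge uniformly,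
  so the limit is differentiable by \<open>has_derivative_sequence\<close>.\<close>
lemma holo_at_uniform_limit:
  fixes f :: "nat \<Rightarrow> complex^'n \<Rightarrow> complex"
  assumes R: "R > 0" and holo: "\<And>n. holo_on (f n) (ball z R)"
    and lim: "uniform_limit (ball z R) f g sequentially"
  shows "\<exists>D. (g has_derivative D) (at z) \<and> (\<forall>c v. D (c *s v) = c * D v)"
proof -
  define S where "S = ball z (R/2)"
  define g' where "g' x h = (\<Sum>i\<in>UNIV. h $ i * partial_deriv g i x)" for x h
  define f' where "f' n x h = (\<Sum>i\<in>UNIV. h $ i * partial_deriv (f n) i x)" for n x h
  have S: "open S" "z \<in> S" "S \<subseteq> ball z R" using R by (auto simp: S_def)
  have "\<exists>g2. \<forall>x\<in>S. (\<lambda>n. f n x) \<longlonglongrightarrow> g2 x \<and> (g2 has_derivative g' x) (at x within S)"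
  proof (rule has_derivative_sequence[where f' = f'])
    show "(f n has_derivative f' n x) (at x within S)" if "x \<in> S" for n x
      unfolding f'_def using holo_on_has_derivative_partials[OF holo] that S(3)
      by (blast intro: has_derivative_at_withinI)
    show "\<forall>\<^sub>F n in sequentially. \<forall>x\<in>S. \<forall>h. norm (f' n x h - g' x h) \<le> e * norm h"
      if "e > 0" for e
    proof -
      have "e * R / (4 * CARD('n)) > 0" using that R by simp
      from partial_deriv_uniform_limit[OF R holo lim this]
      show ?thesis
        unfolding S_def f'_def g'_def
        by eventually_elim
          (use R in \<open>auto intro!: order_trans[OF norm_sum_coordinates_diff_le[where d = "e / CARD('n)"]]\<close>)
    qed
    show "(\<lambda>n. f n z) \<longlonglongrightarrow> g z" using tendsto_uniform_limitI[OF lim] R by simp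
  qed (use S in \<open>auto simp: S_def\<close>)
  then obtain g2 where g2: "\<And>x. x \<in> S \<Longrightarrow> (\<lambda>n. f n x) \<longlonglongrightarrow> g2 x \<and> (g2 has_derivative g' x) (at x within S)"
    by blast
  have g2_eq: "g2 x = g x" if "x \<in> S" for x
    using LIMSEQ_unique[OF conjunct1[OF g2[OF that]] tendsto_uniform_limitI[OF lim]] that S(3) by blast
  have "(g2 has_derivative g' z) (at z)"
    using g2 at_within_open S(1,2) by metis
  then have "(g has_derivative g' z) (at z)"
    using has_derivative_transform_within_open S(1,2) g2_eq by blast
  moreover have "\<forall>c v. g' z (c *s v) = c * g' z v"
    by (simp add: g'_def sum_distrib_left mult.assoc)
  ultimately show ?thesis by blast
qed

lemma holo_on_uniform_limit:
  assumes "\<And>n. holo_on (f n) U"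
    and "\<And>z. z \<in> U \<Longrightarrow> \<exists>R>0. ball z R \<subseteq> U \<and> uniform_limit (ball z R) f g sequentially"
  shows "holo_on g U"
  unfolding holo_on_def
proof
  fix z assume "z \<in> U"
  then obtain R where "R > 0" "ball z R \<subseteq> U" "uniform_limit (ball z R) f g sequentially"
    using assms(2) by blast
  then show "\<exists>D. (g has_derivative D) (at z) \<and> (\<forall>c v. D (c *s v) = c * D v)"
    using holo_at_uniform_limit[of R f z g] assms(1) holo_on_subset by blast
qed

lemma uniform_limit_sequentially_rate:
  assumes "\<And>n x. x \<in> S \<Longrightarrow> dist (f n x) (g x) \<le> C / (real n + 1)"
  shows "uniform_limit S f g sequentially"
  unfolding uniform_limit_sequentially_iff
proof (intro allI impI)
  fix e :: real assume "e > 0"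
  obtain N :: nat where N: "\<bar>C\<bar> / e < real N" using reals_Archimedean2 by blast
  have "dist (f n x) (g x) < e" if "n \<ge> N" "x \<in> S" for n x
  proof -
    have "dist (f n x) (g x) \<le> C / (real n + 1)" using assms[OF that(2)] .
    also have "\<dots> \<le> \<bar>C\<bar> / (real n + 1)" by (rule divide_right_mono) auto
    also have "\<dots> < e"
    proof -
      have "\<bar>C\<bar> < e * real N" using N \<open>e > 0\<close> by (simp add: field_simps)
      also have "\<dots> \<le> e * real n" using that(1) \<open>e > 0\<close> by simp
      finally show ?thesis using \<open>e > 0\<close> by (simp add: field_simps)
    qed
    finally show ?thesis .
  qed
  then show "\<exists>N. \<forall>n\<ge>N. \<forall>x\<in>S. dist (f n x) (g x) < e" by blast
qed

section \<open>The algebra \<open>A(\<Omega>)\<close> and quasi-free Hilbert modules\<close>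

lemma holo_on_A_alg:
  assumes "open \<Omega>" and "\<phi> \<in> A_alg \<Omega>"
  shows "holo_on \<phi> \<Omega>"
proof -
  have "\<forall>n::nat. \<exists>g U. open U \<and> closure \<Omega> \<subseteq> U \<and> holo_on g U \<and>
      (\<forall>z\<in>\<Omega>. norm (\<phi> z - g z) < 1 / (real n + 1))"
    using assms(2) unfolding A_alg_def by auto
  then obtain g where g: "\<And>n. holo_on (g n) \<Omega>" "\<And>n z. z \<in> \<Omega> \<Longrightarrow> norm (\<phi> z - g n z) < 1 / (real n + 1)"
    by (metis closure_subset holo_on_subset order_trans)
  have "uniform_limit \<Omega> g \<phi> sequentially"
    using g(2) by (intro uniform_limit_sequentially_rate[of _ _ _ 1])
      (simp add: dist_norm norm_minus_commute less_imp_le)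
  then show ?thesis
    using g(1) assms(1) open_contains_ball uniform_limit_on_subset
    by (metis holo_on_uniform_limit)
qed

lemma A_alg_vanishes: "\<phi> \<in> A_alg \<Omega> \<Longrightarrow> z \<notin> \<Omega> \<Longrightarrow> \<phi> z = 0"
  unfolding A_alg_def by auto

lemma A_alg_indicator: "(\<lambda>z. if z \<in> \<Omega> then c else 0) \<in> A_alg \<Omega>"
  unfolding A_alg_def
  by (auto intro!: exI[of _ "\<lambda>z. c"] exI[of _ UNIV])

lemma A_alg_diff_indicator:
  assumes "\<phi> \<in> A_alg \<Omega>"
  shows "(\<lambda>z. \<phi> z - (if z \<in> \<Omega> then c else 0)) \<in> A_alg \<Omega>"
  unfolding A_alg_def
proof (intro CollectI conjI allI impI)
  show "\<phi> z - (if z \<in> \<Omega> then c else 0) = 0" if "z \<notin> \<Omega>" for z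
    using A_alg_vanishes[OF assms that] that by simp
  fix e :: real assume "e > 0"
  then obtain g U where gU: "open U" "closure \<Omega> \<subseteq> U" "holo_on g U" "\<forall>z\<in>\<Omega>. norm (\<phi> z - g z) < e"
    using assms unfolding A_alg_def by blast
  show "\<exists>g U. open U \<and> closure \<Omega> \<subseteq> U \<and> holo_on g U \<and>
      (\<forall>z\<in>\<Omega>. norm (\<phi> z - (if z \<in> \<Omega> then c else 0) - g z) < e)"
  proof (intro exI conjI)
    show "holo_on (\<lambda>z. g z + - c) U" using holo_on_add[OF gU(3) holo_on_const] .
  qed (use gU in auto)
qed

text \<open>Elements of \<^const>\<open>A_alg\<close> vanish off \<open>\<Omega>\<close>, so the constant sections are cut off there.\<close>
definition unit_section :: "(complex^'n) set \<Rightarrow> 'm \<Rightarrow> complex^'n \<Rightarrow> complex^'m" where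
  "unit_section \<Omega> j z = (if z \<in> \<Omega> then axis j 1 else 0)"

lemma unit_section_A_tensor: "unit_section \<Omega> j \<in> A_tensor \<Omega>"
proof -
  have "(\<lambda>z. unit_section \<Omega> j z $ a) = (\<lambda>z. if z \<in> \<Omega> then axis j 1 $ a else 0)" for a
    by (simp add: unit_section_def fun_eq_iff)
  then show ?thesis unfolding A_tensor_def by (simp add: A_alg_indicator)
qed

lemma A_tensor_expansion:
  assumes "A \<in> A_tensor \<Omega>"
  shows "A w = (\<Sum>j\<in>UNIV. A w $ j *s unit_section \<Omega> j w)"
proof (cases "w \<in> \<Omega>")
  case True
  then show ?thesis by (simp add: unit_section_def basis_expansion)
next
  case False
  then have "A w $ j = 0" for j
    using A_alg_vanishes assms unfolding A_tensor_def by blast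
  then show ?thesis using False by (simp add: unit_section_def vec_eq_iff)
qed

lemma A_tensor_decompose_at:
  assumes "A \<in> A_tensor \<Omega>"
  shows "G w - (\<Sum>j\<in>UNIV. mult (\<lambda>w. A w $ j - (if w \<in> \<Omega> then A z $ j else 0)) (unit_section \<Omega> j) w)
      = (G w - A w) + (\<Sum>j\<in>UNIV. A z $ j *s unit_section \<Omega> j w)"
proof -
  have "mult (\<lambda>w. A w $ j - (if w \<in> \<Omega> then A z $ j else 0)) (unit_section \<Omega> j) w
      = A w $ j *s unit_section \<Omega> j w - A z $ j *s unit_section \<Omega> j w" for j
    by (simp add: mult_def unit_section_def vector_sub_rdistrib)
  then show ?thesis
    by (simp add: sum_subtractf A_tensor_expansion[OF assms, symmetric])
qed

lemma loc_sub_intro: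
  assumes "G \<in> H"
    and approx: "\<And>e. e > 0 \<Longrightarrow> \<exists>\<phi> h. (\<forall>j::'k::finite. \<phi> j \<in> A_alg \<Omega> \<and> \<phi> j z = 0 \<and> h j \<in> H) \<and>
                 hnorm ip (\<lambda>w. G w - (\<Sum>j\<in>UNIV. mult (\<phi> j) (h j) w)) < e"
  shows "G \<in> loc_sub \<Omega> H ip z"
  unfolding loc_sub_def
proof (intro CollectI conjI allI impI \<open>G \<in> H\<close>)
  fix e :: real assume "e > 0"
  obtain b where b: "bij_betw b {..<CARD('k)} (UNIV :: 'k set)"
    using ex_bij_betw_nat_finite[of "UNIV :: 'k set"] by (auto simp: atLeast0LessThan)
  obtain \<phi> h where \<phi>h: "\<forall>j::'k. \<phi> j \<in> A_alg \<Omega> \<and> \<phi> j z = 0 \<and> h j \<in> H"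
    and close: "hnorm ip (\<lambda>w. G w - (\<Sum>j\<in>UNIV. mult (\<phi> j) (h j) w)) < e"
    using approx[OF \<open>e > 0\<close>] by blast
  have "(\<Sum>i<CARD('k). mult (\<phi> (b i)) (h (b i)) w) = (\<Sum>j\<in>UNIV. mult (\<phi> j) (h j) w)" for w
    using sum.reindex_bij_betw[OF b, of "\<lambda>j. mult (\<phi> j) (h j) w"] .
  then show "\<exists>(n::nat) \<phi>' h'. (\<forall>i<n. \<phi>' i \<in> A_alg \<Omega> \<and> \<phi>' i z = 0 \<and> h' i \<in> H) \<and>
      hnorm ip (\<lambda>w. G w - (\<Sum>i<n. mult (\<phi>' i) (h' i) w)) < e"
    using \<phi>h close by (intro exI[of _ "CARD('k)"] exI[of _ "\<phi> \<circ> b"] exI[of _ "h \<circ> b"]) auto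
qed

lemma nonneg_quadratic_imp_coeff_le:
  fixes a b c :: real
  assumes q: "\<And>t. 0 \<le> t\<^sup>2 * a + 2 * t * b + c" and "a \<ge> 0" and "c \<ge> 0"
  shows "b \<le> sqrt a * sqrt c"
proof -
  have "b\<^sup>2 \<le> a * c"
  proof (cases "a = 0")
    case True
    have "b = 0"
    proof (rule ccontr)
      assume "b \<noteq> 0"
      have "0 \<le> (-(c + 1) / (2 * b))\<^sup>2 * a + 2 * (-(c + 1) / (2 * b)) * b + c" by (rule q)
      also have "\<dots> = -1" using True \<open>b \<noteq> 0\<close> by (simp add: field_simps)
      finally show False by simp
    qed
    then show ?thesis using True by simp
  next
    case False
    then have "a > 0" using \<open>a \<ge> 0\<close> by simp
    have "0 \<le> (-b / a)\<^sup>2 * a + 2 * (-b / a) * b + c" by (rule q)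
    also have "\<dots> = c - b\<^sup>2 / a" using \<open>a > 0\<close> by (simp add: field_simps power2_eq_square)
    finally show ?thesis using \<open>a > 0\<close> by (simp add: field_simps)
  qed
  then have "sqrt (b\<^sup>2) \<le> sqrt (a * c)" by (rule real_sqrt_le_mono)
  then show ?thesis by (simp add: real_sqrt_mult)
qed

locale quasi_free_module =
  fixes \<Omega> :: "(complex^'n) set"
    and H :: "(complex^'n \<Rightarrow> complex^'m) set"
    and ip :: "(complex^'n \<Rightarrow> complex^'m) \<Rightarrow> (complex^'n \<Rightarrow> complex^'m) \<Rightarrow> complex"
  assumes quasi_free: "quasi_free \<Omega> H ip"
begin

lemma zero_mem: "(\<lambda>z. 0) \<in> H"
  using quasi_free unfolding quasi_free_def by (elim conjE) blast

lemma comb_mem: "F \<in> H \<Longrightarrow> G \<in> H \<Longrightarrow> (\<lambda>z. c *s F z + G z) \<in> H"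
  using quasi_free unfolding quasi_free_def by (elim conjE) blast

lemma ip_comb_left:
  "F \<in> H \<Longrightarrow> G \<in> H \<Longrightarrow> K \<in> H \<Longrightarrow> ip (\<lambda>z. c *s F z + G z) K = c * ip F K + ip G K"
  using quasi_free unfolding quasi_free_def by (elim conjE) blast

lemma ip_sym: "F \<in> H \<Longrightarrow> G \<in> H \<Longrightarrow> ip F G = cnj (ip G F)"
  using quasi_free unfolding quasi_free_def by (elim conjE) blast

lemma ip_self_nonneg: "F \<in> H \<Longrightarrow> Re (ip F F) \<ge> 0"
  using quasi_free unfolding quasi_free_def by (elim conjE) blast

lemma A_tensor_subset: "A_tensor \<Omega> \<subseteq> H"
  using quasi_free unfolding quasi_free_def by (elim conjE) blast

lemma A_tensor_dense: "F \<in> H \<Longrightarrow> e > 0 \<Longrightarrow> \<exists>G\<in>A_tensor \<Omega>. hnorm ip (\<lambda>z. F z - G z) < e"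
  using quasi_free unfolding quasi_free_def by (elim conjE) blast

lemma eval_locally_bounded:
  "z \<in> \<Omega> \<Longrightarrow> \<exists>r>0. \<exists>C. \<forall>w\<in>ball z r \<inter> \<Omega>. \<forall>F\<in>H. norm (F w) \<le> C * hnorm ip F"
  using quasi_free unfolding quasi_free_def by (elim conjE) blast

lemma mult_mem: "\<phi> \<in> A_alg \<Omega> \<Longrightarrow> F \<in> H \<Longrightarrow> mult \<phi> F \<in> H"
proof -
  have "\<forall>\<phi>\<in>A_alg \<Omega>. \<forall>F\<in>H. mult \<phi> F \<in> H \<and> hnorm ip (mult \<phi> F) \<le> sup_norm \<Omega> \<phi> * hnorm ip F"
    using quasi_free unfolding quasi_free_def by (elim conjE) assumption
  then show "\<phi> \<in> A_alg \<Omega> \<Longrightarrow> F \<in> H \<Longrightarrow> mult \<phi> F \<in> H" by blast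
qed

lemma add_mem: "F \<in> H \<Longrightarrow> G \<in> H \<Longrightarrow> (\<lambda>z. F z + G z) \<in> H"
  using comb_mem[of F G 1] by simp

lemma scale_mem: "F \<in> H \<Longrightarrow> (\<lambda>z. c *s F z) \<in> H"
  using comb_mem[OF _ zero_mem, of F c] by simp

lemma diff_mem: "F \<in> H \<Longrightarrow> G \<in> H \<Longrightarrow> (\<lambda>z. F z - G z) \<in> H"
  using comb_mem[of G F "-1"] by (simp add: vector_sneg_minus1[symmetric])

lemma sum_mem: "(\<And>i. i \<in> I \<Longrightarrow> F i \<in> H) \<Longrightarrow> (\<lambda>z. \<Sum>i\<in>I. F i z) \<in> H"
  by (induction I rule: infinite_finite_induct) (auto intro: add_mem zero_mem)

lemma ip_zero_left: "K \<in> H \<Longrightarrow> ip (\<lambda>z. 0) K = 0"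
  using ip_comb_left[OF zero_mem zero_mem, of K 1] by simp

lemma ip_comb_self:
  assumes F: "F \<in> H" and G: "G \<in> H"
  shows "Re (ip (\<lambda>z. c *s F z + G z) (\<lambda>z. c *s F z + G z)) =
     (cmod c)\<^sup>2 * Re (ip F F) + 2 * Re (c * ip F G) + Re (ip G G)"
proof -
  let ?T = "\<lambda>z. c *s F z + G z"
  have T: "?T \<in> H" using comb_mem[OF F G] .
  have "ip ?T ?T = c * ip F ?T + ip G ?T" using ip_comb_left[OF F G T] .
  also have "ip F ?T = cnj (c * ip F F + ip G F)" using ip_sym[OF F T] ip_comb_left[OF F G F] by simp
  also have "ip G ?T = cnj (c * ip F G + ip G G)" using ip_sym[OF G T] ip_comb_left[OF F G G] by simp
  finally have "ip ?T ?T = c * cnj c * cnj (ip F F) + c * cnj (ip G F) + cnj (c * ip F G) + cnj (ip G G)"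
    by (simp add: algebra_simps)
  moreover have "cnj (ip G F) = ip F G" using ip_sym[OF F G] by simp
  moreover have "c * cnj c = of_real ((cmod c)\<^sup>2)" by (rule complex_norm_square[symmetric])
  ultimately show ?thesis by simp
qed

lemma hnorm_nonneg: "F \<in> H \<Longrightarrow> hnorm ip F \<ge> 0"
  unfolding hnorm_def using ip_self_nonneg by simp

lemma hnorm_triangle:
  assumes F: "F \<in> H" and G: "G \<in> H"
  shows "hnorm ip (\<lambda>z. F z + G z) \<le> hnorm ip F + hnorm ip G"
proof -
  have "Re (ip F G) \<le> sqrt (Re (ip F F)) * sqrt (Re (ip G G))"
  proof (rule nonneg_quadratic_imp_coeff_le)
    show "0 \<le> t\<^sup>2 * Re (ip F F) + 2 * t * Re (ip F G) + Re (ip G G)" for t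
      using ip_self_nonneg[OF comb_mem[OF F G, of "of_real t"]] ip_comb_self[OF F G, of "of_real t"]
      by simp
  qed (use ip_self_nonneg F G in auto)
  moreover have "Re (ip (\<lambda>z. F z + G z) (\<lambda>z. F z + G z)) = Re (ip F F) + 2 * Re (ip F G) + Re (ip G G)"
    using ip_comb_self[OF F G, of 1] by simp
  ultimately have "Re (ip (\<lambda>z. F z + G z) (\<lambda>z. F z + G z)) \<le> (hnorm ip F + hnorm ip G)\<^sup>2"
    using ip_self_nonneg[OF F] ip_self_nonneg[OF G]
    by (simp add: hnorm_def power2_eq_square algebra_simps)
  then show ?thesis
    using hnorm_nonneg[OF F] hnorm_nonneg[OF G] real_sqrt_le_mono by (fastforce simp: hnorm_def)
qed

lemma hnorm_scale:
  assumes "F \<in> H"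
  shows "hnorm ip (\<lambda>z. c *s F z) = cmod c * hnorm ip F"
  using ip_comb_self[OF assms zero_mem, of c] ip_zero_left[OF zero_mem] ip_zero_left[OF assms]
    ip_sym[OF assms zero_mem]
  by (simp add: hnorm_def real_sqrt_mult)

lemma hnorm_sum_le:
  "(\<And>i. i \<in> I \<Longrightarrow> F i \<in> H) \<Longrightarrow> hnorm ip (\<lambda>z. \<Sum>i\<in>I. F i z) \<le> (\<Sum>i\<in>I. hnorm ip (F i))"
proof (induction I rule: infinite_finite_induct)
  case (insert i I)
  then have "hnorm ip (\<lambda>z. F i z + (\<Sum>i\<in>I. F i z)) \<le> hnorm ip (F i) + hnorm ip (\<lambda>z. \<Sum>i\<in>I. F i z)"
    by (intro hnorm_triangle sum_mem) auto
  with insert show ?case by simp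
qed (simp_all add: hnorm_def ip_zero_left[OF zero_mem])

lemma eval_bounded:
  assumes "z \<in> \<Omega>"
  obtains C where "C \<ge> 0" "\<And>F. F \<in> H \<Longrightarrow> norm (F z) \<le> C * hnorm ip F"
proof -
  obtain r C where "r > 0" and C: "\<forall>w\<in>ball z r \<inter> \<Omega>. \<forall>F\<in>H. norm (F w) \<le> C * hnorm ip F"
    using eval_locally_bounded[OF assms] by blast
  then have z: "z \<in> ball z r \<inter> \<Omega>" using assms by simp
  have "norm (F z) \<le> \<bar>C\<bar> * hnorm ip F" if "F \<in> H" for F
  proof -
    have "norm (F z) \<le> C * hnorm ip F" using C z that by blast
    also have "\<dots> \<le> \<bar>C\<bar> * hnorm ip F" by (rule mult_right_mono[OF abs_ge_self hnorm_nonneg[OF that]])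
    finally show ?thesis .
  qed
  then show ?thesis using that[of "\<bar>C\<bar>"] by simp
qed

lemma eval_combination_bounded:
  fixes v :: "'m \<Rightarrow> complex^'k"
  assumes "z \<in> \<Omega>"
  obtains M where "\<And>F. F \<in> H \<Longrightarrow> norm (\<Sum>j\<in>UNIV. F z $ j *s v j) \<le> M * hnorm ip F"
proof -
  obtain C where C: "C \<ge> 0" "\<And>F. F \<in> H \<Longrightarrow> norm (F z) \<le> C * hnorm ip F"
    using eval_bounded[OF assms] by blast
  have "norm (\<Sum>j\<in>UNIV. F z $ j *s v j) \<le> (C * (\<Sum>j\<in>UNIV. norm (v j))) * hnorm ip F"
    if F: "F \<in> H" for F
  proof -
    have "norm (\<Sum>j\<in>UNIV. F z $ j *s v j) \<le> (\<Sum>j\<in>UNIV. norm (F z $ j) * norm (v j))"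
      by (rule order_trans[OF norm_sum]) (simp add: norm_vector_smult)
    also have "\<dots> \<le> (\<Sum>j\<in>UNIV. C * hnorm ip F * norm (v j))"
      using Finite_Cartesian_Product.norm_nth_le[of "F z"] C(2)[OF F]
      by (intro sum_mono mult_right_mono) (auto intro: order_trans)
    also have "\<dots> = (C * (\<Sum>j\<in>UNIV. norm (v j))) * hnorm ip F"
      by (simp add: sum_distrib_left sum_distrib_right mult_ac)
    finally show ?thesis .
  qed
  then show ?thesis by (rule that)
qed

lemma component_holo:
  assumes "open \<Omega>" and F: "F \<in> H"
  shows "holo_on (\<lambda>w. F w $ a) \<Omega>"
proof -
  have "\<forall>n::nat. \<exists>G\<in>A_tensor \<Omega>. hnorm ip (\<lambda>z. F z - G z) < 1 / (real n + 1)"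
    using A_tensor_dense[OF F] by simp
  then obtain G where G: "\<And>n. G n \<in> A_tensor \<Omega>" "\<And>n. hnorm ip (\<lambda>z. F z - G n z) < 1 / (real n + 1)"
    by metis
  have "holo_on (\<lambda>w. G n w $ a) \<Omega>" for n
    using G(1) assms(1) holo_on_A_alg unfolding A_tensor_def by blast
  moreover have "\<exists>R>0. ball z R \<subseteq> \<Omega> \<and> uniform_limit (ball z R) (\<lambda>n w. G n w $ a) (\<lambda>w. F w $ a) sequentially"
    if z: "z \<in> \<Omega>" for z
  proof -
    obtain r C where rC: "r > 0" "\<forall>w\<in>ball z r \<inter> \<Omega>. \<forall>F\<in>H. norm (F w) \<le> C * hnorm ip F"
      using eval_locally_bounded[OF z] by blast
    obtain R0 where "R0 > 0" "ball z R0 \<subseteq> \<Omega>"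
      using assms(1) z open_contains_ball by blast
    then have R: "min r R0 > 0" "ball z (min r R0) \<subseteq> \<Omega> \<inter> ball z r"
      using rC(1) by auto
    have "dist (G n w $ a) (F w $ a) \<le> \<bar>C\<bar> / (real n + 1)" if w: "w \<in> ball z (min r R0)" for n w
    proof -
      have D: "(\<lambda>z. F z - G n z) \<in> H" using G(1) A_tensor_subset F by (blast intro: diff_mem)
      have "dist (G n w $ a) (F w $ a) \<le> norm (F w - G n w)"
        using Finite_Cartesian_Product.norm_nth_le[of "F w - G n w" a] by (simp add: dist_norm norm_minus_commute)
      also have "\<dots> \<le> C * hnorm ip (\<lambda>z. F z - G n z)"
        using rC(2)[rule_format, OF _ D] w R(2) by blast
      also have "\<dots> \<le> \<bar>C\<bar> * hnorm ip (\<lambda>z. F z - G n z)"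
        by (rule mult_right_mono[OF abs_ge_self hnorm_nonneg[OF D]])
      also have "\<dots> \<le> \<bar>C\<bar> / (real n + 1)"
        using G(2)[of n] by (simp add: mult_left_mono divide_inverse)
      finally show ?thesis .
    qed
    then have "uniform_limit (ball z (min r R0)) (\<lambda>n w. G n w $ a) (\<lambda>w. F w $ a) sequentially"
      by (rule uniform_limit_sequentially_rate)
    then show ?thesis using R by blast
  qed
  ultimately show ?thesis by (rule holo_on_uniform_limit)
qed

lemma unit_section_mem: "unit_section \<Omega> j \<in> H"
  using unit_section_A_tensor A_tensor_subset by blast

lemma hnorm_sum_scale_le:
  "(\<And>j. j \<in> I \<Longrightarrow> F j \<in> H) \<Longrightarrow>
    hnorm ip (\<lambda>z. \<Sum>j\<in>I. c j *s F j z) \<le> (\<Sum>j\<in>I. cmod (c j) * hnorm ip (F j))"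
  using hnorm_sum_le[of I "\<lambda>j z. c j *s F j z"] by (simp add: scale_mem hnorm_scale)

lemma eq_zero_if_approximable:
  fixes L :: "(complex^'n \<Rightarrow> complex^'m) \<Rightarrow> 'v::real_normed_vector"
  assumes diff: "\<And>F G. F \<in> H \<Longrightarrow> G \<in> H \<Longrightarrow> L (\<lambda>z. F z - G z) = L F - L G"
    and bound: "\<And>F. F \<in> H \<Longrightarrow> norm (L F) \<le> C * hnorm ip F"
    and approx: "\<And>e. e > 0 \<Longrightarrow> \<exists>G\<in>H. L G = 0 \<and> hnorm ip (\<lambda>z. F z - G z) < e"
    and "F \<in> H"
  shows "L F = 0"
proof -
  have "norm (L F) \<le> 0 + e" if "e > 0" for e
  proof -
    obtain G where G: "G \<in> H" "L G = 0" "hnorm ip (\<lambda>z. F z - G z) < e / (\<bar>C\<bar> + 1)"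
      using approx[of "e / (\<bar>C\<bar> + 1)"] \<open>e > 0\<close> by auto
    have D: "(\<lambda>z. F z - G z) \<in> H" using diff_mem[OF \<open>F \<in> H\<close> G(1)] .
    have "norm (L F) = norm (L (\<lambda>z. F z - G z))" using diff[OF \<open>F \<in> H\<close> G(1)] G(2) by simp
    also have "\<dots> \<le> (\<bar>C\<bar> + 1) * hnorm ip (\<lambda>z. F z - G z)"
      using bound[OF D] hnorm_nonneg[OF D] by (smt (verit) mult_right_mono)
    also have "\<dots> \<le> e" using G(3) by (simp add: field_simps)
    finally show ?thesis by simp
  qed
  then show ?thesis using field_le_epsilon[of "norm (L F)" 0] by simp
qed

lemma loc_sub_vanishes:
  assumes z: "z \<in> \<Omega>" and G: "G \<in> loc_sub \<Omega> H ip z"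
  shows "G z = 0"
proof -
  obtain C where C: "\<And>F. F \<in> H \<Longrightarrow> norm (F z) \<le> C * hnorm ip F"
    using eval_bounded[OF z] by blast
  show ?thesis
  proof (rule eq_zero_if_approximable[where L = "\<lambda>F. F z"])
    show "\<exists>S\<in>H. S z = 0 \<and> hnorm ip (\<lambda>w. G w - S w) < e" if "e > 0" for e
    proof -
      obtain n \<phi> h where \<phi>h: "\<forall>i<(n::nat). \<phi> i \<in> A_alg \<Omega> \<and> \<phi> i z = 0 \<and> h i \<in> H"
        and close: "hnorm ip (\<lambda>w. G w - (\<Sum>i<n. mult (\<phi> i) (h i) w)) < e"
        using G \<open>e > 0\<close> unfolding loc_sub_def by blast
      have "(\<lambda>w. \<Sum>i<n. mult (\<phi> i) (h i) w) \<in> H"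
        using \<phi>h by (intro sum_mem mult_mem) auto
      moreover have "(\<Sum>i<n. mult (\<phi> i) (h i) z) = 0"
        using \<phi>h by (intro sum.neutral) (simp add: mult_def)
      ultimately show ?thesis
        using close by (intro bexI[of _ "\<lambda>w. \<Sum>i<n. mult (\<phi> i) (h i) w"]) auto
    qed
  qed (use G C in \<open>auto simp: loc_sub_def\<close>)
qed

lemma hnorm_constant_section_le:
  assumes "\<And>j. norm (c j) \<le> b"
  shows "hnorm ip (\<lambda>w. \<Sum>j\<in>UNIV. c j *s unit_section \<Omega> j w) \<le> b * (\<Sum>j\<in>UNIV. hnorm ip (unit_section \<Omega> j))"
proof -
  have "hnorm ip (\<lambda>w. \<Sum>j\<in>UNIV. c j *s unit_section \<Omega> j w)
      \<le> (\<Sum>j\<in>UNIV. norm (c j) * hnorm ip (unit_section \<Omega> j))"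
    by (rule hnorm_sum_scale_le) (rule unit_section_mem)
  also have "\<dots> \<le> (\<Sum>j\<in>UNIV. b * hnorm ip (unit_section \<Omega> j))"
    by (intro sum_mono mult_right_mono assms hnorm_nonneg unit_section_mem)
  finally show ?thesis by (simp add: sum_distrib_left)
qed

text \<open>Approximate \<open>G\<close> by \<open>A \<in> A_tensor \<Omega>\<close>. Subtracting from each coordinate of \<open>A\<close> its value
  at \<open>z\<close> gives multipliers vanishing at \<open>z\<close>; what is left over is \<open>G - A\<close> plus a constant
  section with coefficients \<open>A z = (A - G) z\<close>, and both are small.\<close>
lemma vanishing_mem_loc_sub:
  assumes z: "z \<in> \<Omega>" and G: "G \<in> H" "G z = 0"
  shows "G \<in> loc_sub \<Omega> H ip z"
proof (rule loc_sub_intro[where 'k = 'm, OF G(1)])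
  fix e :: real assume "e > 0"
  obtain C where C: "C \<ge> 0" "\<And>F. F \<in> H \<Longrightarrow> norm (F z) \<le> C * hnorm ip F"
    using eval_bounded[OF z] by blast
  define W where "W = (\<Sum>j\<in>UNIV. hnorm ip (unit_section \<Omega> j :: _ \<Rightarrow> complex^'m))"
  have CW: "1 + C * W > 0"
    using C(1) hnorm_nonneg[OF unit_section_mem] by (simp add: W_def add_pos_nonneg sum_nonneg)
  define d where "d = e / (1 + C * W)"
  have "d > 0" using \<open>e > 0\<close> CW by (simp add: d_def)
  then obtain A where A: "A \<in> A_tensor \<Omega>" "hnorm ip (\<lambda>w. G w - A w) < d"
    using A_tensor_dense G(1) by blast
  have D: "(\<lambda>w. G w - A w) \<in> H" using A(1) A_tensor_subset G(1) by (blast intro: diff_mem)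
  define \<phi> where "\<phi> j = (\<lambda>w. A w $ j - (if w \<in> \<Omega> then A z $ j else 0))" for j
  have \<phi>: "\<phi> j \<in> A_alg \<Omega>" "\<phi> j z = 0" for j
    using A_alg_diff_indicator[of "\<lambda>w. A w $ j"] A(1) z by (auto simp: \<phi>_def A_tensor_def)
  have "norm (A z $ j) \<le> C * d" for j
  proof -
    have "norm (A z $ j) \<le> norm ((\<lambda>w. G w - A w) z)"
      using Finite_Cartesian_Product.norm_nth_le[of "A z" j] G(2) by simp
    also have "\<dots> \<le> C * d" using C(2)[OF D] A(2) C(1) by (smt (verit) mult_left_mono)
    finally show ?thesis .
  qed
  then have const: "hnorm ip (\<lambda>w. \<Sum>j\<in>UNIV. A z $ j *s unit_section \<Omega> j w) \<le> C * d * W"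
    unfolding W_def by (rule hnorm_constant_section_le)
  have "(\<lambda>w. G w - (\<Sum>j\<in>UNIV. mult (\<phi> j) (unit_section \<Omega> j) w))
      = (\<lambda>w. (G w - A w) + (\<Sum>j\<in>UNIV. A z $ j *s unit_section \<Omega> j w))"
    unfolding \<phi>_def A_tensor_decompose_at[OF A(1)] ..
  then have "hnorm ip (\<lambda>w. G w - (\<Sum>j\<in>UNIV. mult (\<phi> j) (unit_section \<Omega> j) w))
      \<le> hnorm ip (\<lambda>w. G w - A w) + hnorm ip (\<lambda>w. \<Sum>j\<in>UNIV. A z $ j *s unit_section \<Omega> j w)"
    using hnorm_triangle[OF D sum_mem[OF scale_mem[OF unit_section_mem]]] by simp
  also have "\<dots> < d * (1 + C * W)" using const A(2) by (simp add: algebra_simps)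
  also have "\<dots> = e" using CW by (simp add: d_def)
  finally show "\<exists>\<phi> h. (\<forall>j::'m. \<phi> j \<in> A_alg \<Omega> \<and> \<phi> j z = 0 \<and> h j \<in> H) \<and>
      hnorm ip (\<lambda>w. G w - (\<Sum>j\<in>UNIV. mult (\<phi> j) (h j) w)) < e"
    using \<phi> unit_section_mem by (intro exI[of _ \<phi>] exI[of _ "unit_section \<Omega>"] conjI allI) auto
qed

lemma loc_sub_iff: "z \<in> \<Omega> \<Longrightarrow> G \<in> loc_sub \<Omega> H ip z \<longleftrightarrow> G \<in> H \<and> G z = 0"
  using loc_sub_vanishes vanishing_mem_loc_sub by (auto simp: loc_sub_def)

end

section \<open>Independence and determinants\<close>

definition independent_family :: "'i set \<Rightarrow> ('i \<Rightarrow> 'a::field^'n) \<Rightarrow> bool" where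
  "independent_family I u \<longleftrightarrow> (\<forall>c. (\<Sum>i\<in>I. c i *s u i) = 0 \<longrightarrow> (\<forall>i\<in>I. c i = 0))"

lemma independent_family_iff:
  fixes u :: "'i \<Rightarrow> 'a::field^'n"
  assumes "finite I"
  shows "independent_family I u \<longleftrightarrow> inj_on u I \<and> vec.independent (u ` I)"
proof
  assume ind: "independent_family I u"
  show "inj_on u I \<and> vec.independent (u ` I)"
  proof
    show inj: "inj_on u I"
    proof (rule inj_onI, rule ccontr)
      fix i j assume ij: "i \<in> I" "j \<in> I" "u i = u j" "i \<noteq> j"
      define c where "c l = (if l = i then 1 else if l = j then -1 else 0 :: 'a)" for l
      have "(\<Sum>l\<in>I. c l *s u l) = (\<Sum>l\<in>{i, j}. c l *s u l)"
        using assms ij by (intro sum.mono_neutral_right) (auto simp: c_def)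
      also have "\<dots> = 0" using ij by (simp add: c_def)
      finally have "c i = 0" using ind ij(1) unfolding independent_family_def by blast
      then show False by (simp add: c_def)
    qed
    show "vec.independent (u ` I)"
    proof
      assume "vec.dependent (u ` I)"
      then obtain a where a: "\<exists>w\<in>u ` I. a w \<noteq> 0" "(\<Sum>w\<in>u ` I. a w *s w) = 0"
        using vec.dependent_finite[of "u ` I"] assms by auto
      have "(\<Sum>i\<in>I. a (u i) *s u i) = 0"
        using a(2) sum.reindex[OF inj, of "\<lambda>w. a w *s w"] by simp
      then show False using a(1) ind unfolding independent_family_def by auto
    qed
  qed
next
  assume "inj_on u I \<and> vec.independent (u ` I)"
  then have inj: "inj_on u I" and indep: "vec.independent (u ` I)" by auto
  show "independent_family I u"
    unfolding independent_family_def
  proof (intro allI impI ballI)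
    fix c i assume sum0: "(\<Sum>i\<in>I. c i *s u i) = 0" and i: "i \<in> I"
    define a where "a w = c (inv_into I u w)" for w
    have "(\<Sum>w\<in>u ` I. a w *s w) = 0"
      using sum0 sum.reindex[OF inj, of "\<lambda>w. a w *s w"] by (simp add: a_def inv_into_f_f[OF inj])
    then have "a (u i) = 0"
      using indep vec.dependent_finite[of "u ` I"] assms i by auto
    then show "c i = 0" by (simp add: a_def inv_into_f_f[OF inj i])
  qed
qed

lemma Greatest_independent_family_eq_dim:
  fixes V :: "('a::field^'n) set"
  shows "(GREATEST k::nat. \<exists>u. (\<forall>i<k. u i \<in> vec.span V) \<and> independent_family {..<k} u) = vec.dim V"
proof (rule Greatest_equality)
  obtain B where B: "B \<subseteq> V" "vec.independent B" "V \<subseteq> vec.span B" "card B = vec.dim V"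
    by (rule vec.basis_exists)
  have "finite B" using B(2) by (rule vec.finiteI_independent)
  then obtain e where "bij_betw e {0..<card B} B" using ex_bij_betw_nat_finite by blast
  then have e: "bij_betw e {..<vec.dim V} B" using B(4) by (simp add: atLeast0LessThan)
  then have "independent_family {..<vec.dim V} e"
    using B(2) by (simp add: independent_family_iff bij_betw_def)
  moreover have "e i \<in> vec.span V" if "i < vec.dim V" for i
    using bij_betwE[OF e] that B(1) vec.span_superset by blast
  ultimately show "\<exists>u. (\<forall>i<vec.dim V. u i \<in> vec.span V) \<and> independent_family {..<vec.dim V} u"
    by blast
next
  fix k :: nat assume "\<exists>u. (\<forall>i<k. u i \<in> vec.span V) \<and> independent_family {..<k} u"
  then obtain u where span: "\<forall>i<k. u i \<in> vec.span V" and ind: "independent_family {..<k} u"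
    by blast
  have u: "u ` {..<k} \<subseteq> vec.span V" "inj_on u {..<k}" "vec.independent (u ` {..<k})"
    using span ind independent_family_iff[of "{..<k}" u] by auto
  have "card (u ` {..<k}) \<le> vec.dim (vec.span V)"
    using vec.independent_card_le_dim[OF u(1,3)] .
  then show "k \<le> vec.dim V" using card_image[OF u(2)] by simp
qed

lemma row_vec_lambda: "row i (\<chi> r. f r) = f i"
  by (simp add: row_def vec_eq_iff)

lemma det_rows_nonzero_iff:
  fixes f :: "'n \<Rightarrow> 'a::field^'n"
  shows "det (\<chi> r. f r) \<noteq> 0 \<longleftrightarrow> independent_family UNIV f"
  unfolding invertible_det_nz[symmetric] invertible_right_inverse
    matrix_right_invertible_independent_rows independent_family_def row_vec_lambda
  by simp

lemma independent_extend_by_axes: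
  fixes B0 :: "('a::field^'n) set"
  assumes "vec.independent B0"
  obtains R \<beta> where "bij_betw \<beta> R B0"
    and "independent_family UNIV (\<lambda>r. if r \<in> R then \<beta> r else axis r 1)"
proof -
  obtain B1 where B1: "B0 \<subseteq> B1" "B1 \<subseteq> B0 \<union> cart_basis" "vec.independent B1" "B0 \<union> cart_basis \<subseteq> vec.span B1"
    using vec.maximal_independent_subset_extend[of B0 "B0 \<union> cart_basis"] assms by blast
  have fin: "finite B0" "finite B1" using assms B1(3) by (auto intro: vec.finiteI_independent)
  have "UNIV \<subseteq> vec.span B1"
    using vec.span_mono[of cart_basis "vec.span B1"] B1(4) by (simp add: vec.span_eq_iff[THEN iffD2, OF vec.subspace_span])
  then have card_B1: "card B1 = CARD('n)"
    using vec.basis_card_eq_dim[of B1 UNIV] B1(3) vec.dim_UNIV card_cart_basis by simp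
  define Q where "Q = {q. axis q (1::'a) \<in> B1 - B0}"
  define R where "R = - Q"
  have axis_inj: "inj (\<lambda>q::'n. axis q (1::'a))" by (rule injI) (simp add: axis_eq_axis)
  have axis_Q: "(\<lambda>q. axis q 1) ` Q = B1 - B0"
    using B1(2) by (auto simp: Q_def cart_basis_def)
  then have "card Q = card B1 - card B0"
    using card_image[OF inj_on_subset[OF axis_inj, of Q]] card_Diff_subset[OF fin(1) B1(1)] by simp
  moreover have "card R = CARD('n) - card Q"
    unfolding R_def Compl_eq_Diff_UNIV by (simp add: card_Diff_subset)
  moreover have "card B0 \<le> card B1" using card_mono[OF fin(2) B1(1)] .
  ultimately have "card R = card B0" using card_B1 by simp
  then obtain \<beta> where \<beta>: "bij_betw \<beta> R B0"
    using finite_same_card_bij[of R B0] fin(1) by auto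
  define f where "f r = (if r \<in> R then \<beta> r else axis r 1)" for r
  have "f ` R = B0" using \<beta> by (simp add: f_def bij_betw_def)
  moreover have "f ` Q = B1 - B0" using axis_Q by (simp add: f_def R_def)
  moreover have "UNIV = R \<union> Q" by (auto simp: R_def)
  ultimately have range_f: "range f = B1" using B1(1) by (metis Un_Diff_cancel sup.absorb_iff2 image_Un)
  have "inj_on f (R \<union> Q)"
    unfolding inj_on_Un
  proof (intro conjI)
    show "inj_on f R" using \<beta> by (auto simp: f_def bij_betw_def inj_on_def)
    show "inj_on f Q" using axis_inj by (auto simp: f_def R_def inj_on_def)
    show "f ` (R - Q) \<inter> f ` (Q - R) = {}" using \<open>f ` R = B0\<close> \<open>f ` Q = B1 - B0\<close> by blast
  qed
  then have "inj f" by (simp add: R_def)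
  then have "independent_family UNIV f"
    using B1(3) range_f by (simp add: independent_family_iff)
  then show ?thesis using that \<beta> unfolding f_def by blast
qed

text \<open>Nonvanishing
  determinants of these square completions play the role of nonvanishing \<open>(k+1)\<close>-minors.\<close>
definition completed_matrix :: "('m \<Rightarrow> 'a::field^'p) \<Rightarrow> ('p \<Rightarrow> 'm option) \<Rightarrow> 'a^'p^'p" where
  "completed_matrix v s = (\<chi> r. case s r of Some j \<Rightarrow> v j | None \<Rightarrow> axis r 1)"

lemma dim_range_gt_iff_completed_det:
  fixes v :: "'m \<Rightarrow> 'a::field^'p"
  shows "k < vec.dim (range v) \<longleftrightarrow> (\<exists>s. k < card {r. s r \<noteq> None} \<and> det (completed_matrix v s) \<noteq> 0)"
proof
  assume k: "k < vec.dim (range v)"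
  obtain B0 where B0: "B0 \<subseteq> range v" "vec.independent B0" "range v \<subseteq> vec.span B0"
      "card B0 = vec.dim (range v)"
    by (rule vec.basis_exists)
  obtain R \<beta> where \<beta>: "bij_betw \<beta> R B0"
    and ind: "independent_family UNIV (\<lambda>r. if r \<in> R then \<beta> r else axis r 1)"
    using independent_extend_by_axes[OF B0(2)] by blast
  define s where "s r = (if r \<in> R then Some (inv v (\<beta> r)) else None)" for r
  have "v (inv v (\<beta> r)) = \<beta> r" if "r \<in> R" for r
    using bij_betwE[OF \<beta>] B0(1) that by (blast intro: f_inv_into_f)
  then have "completed_matrix v s = (\<chi> r. if r \<in> R then \<beta> r else axis r 1)"
    unfolding completed_matrix_def by (intro arg_cong[where f = vec_lambda] ext) (simp add: s_def)
  then have "det (completed_matrix v s) \<noteq> 0" using ind det_rows_nonzero_iff by metis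
  moreover have "card {r. s r \<noteq> None} = vec.dim (range v)"
    using bij_betw_same_card[OF \<beta>] B0(4) by (simp add: s_def)
  ultimately show "\<exists>s. k < card {r. s r \<noteq> None} \<and> det (completed_matrix v s) \<noteq> 0"
    using k by (intro exI[of _ s]) simp
next
  assume "\<exists>s. k < card {r. s r \<noteq> None} \<and> det (completed_matrix v s) \<noteq> 0"
  then obtain s where k: "k < card {r. s r \<noteq> None}" and det: "det (completed_matrix v s) \<noteq> 0"
    by blast
  define f where "f r = (case s r of Some j \<Rightarrow> v j | None \<Rightarrow> axis r 1)" for r
  define R where "R = {r. s r \<noteq> None}"
  have "independent_family UNIV f"
    using det det_rows_nonzero_iff[of f] by (simp add: completed_matrix_def f_def)
  then have f: "inj f" "vec.independent (range f)" by (simp_all add: independent_family_iff)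
  have "f ` R \<subseteq> range v" by (auto simp: f_def R_def)
  moreover have "vec.independent (f ` R)" using f(2) by (rule vec.independent_mono) auto
  ultimately have "card (f ` R) \<le> vec.dim (range v)" by (rule vec.independent_card_le_dim)
  then show "k < vec.dim (range v)"
    using k card_image[OF inj_on_subset[OF f(1)]] by (simp add: R_def)
qed

section \<open>Module maps and their localisations\<close>

locale quasi_free_module_map =
  source: quasi_free_module \<Omega> H ip + target: quasi_free_module \<Omega> H' ip'
  for \<Omega> :: "(complex^'n) set"
    and H :: "(complex^'n \<Rightarrow> complex^'m) set"
    and ip :: "(complex^'n \<Rightarrow> complex^'m) \<Rightarrow> (complex^'n \<Rightarrow> complex^'m) \<Rightarrow> complex"
    and H' :: "(complex^'n \<Rightarrow> complex^'p) set"
    and ip' :: "(complex^'n \<Rightarrow> complex^'p) \<Rightarrow> (complex^'n \<Rightarrow> complex^'p) \<Rightarrow> complex" +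
  fixes X :: "(complex^'n \<Rightarrow> complex^'m) \<Rightarrow> complex^'n \<Rightarrow> complex^'p"
  assumes module_map: "module_map \<Omega> H ip H' ip' X"
begin

lemma X_mem: "F \<in> H \<Longrightarrow> X F \<in> H'"
  using module_map unfolding module_map_def by blast

lemma X_comb: "F \<in> H \<Longrightarrow> G \<in> H \<Longrightarrow> X (\<lambda>z. c *s F z + G z) = (\<lambda>z. c *s X F z + X G z)"
  using module_map unfolding module_map_def by blast

lemma X_bounded:
  obtains B where "\<And>F. F \<in> H \<Longrightarrow> hnorm ip' (X F) \<le> B * hnorm ip F"
  using module_map unfolding module_map_def by blast

lemma X_mult: "\<phi> \<in> A_alg \<Omega> \<Longrightarrow> F \<in> H \<Longrightarrow> X (mult \<phi> F) = mult \<phi> (X F)"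
  using module_map unfolding module_map_def by blast

lemma X_zero: "X (\<lambda>z. 0) = (\<lambda>z. 0)"
  using X_comb[OF source.zero_mem source.zero_mem, of "-1"] by simp

lemma X_diff: "F \<in> H \<Longrightarrow> G \<in> H \<Longrightarrow> X (\<lambda>z. F z - G z) = (\<lambda>z. X F z - X G z)"
  using X_comb[of G F "-1"] by (simp add: vector_sneg_minus1[symmetric])

lemma X_sum: "(\<And>i. i \<in> I \<Longrightarrow> F i \<in> H) \<Longrightarrow> X (\<lambda>z. \<Sum>i\<in>I. F i z) = (\<lambda>z. \<Sum>i\<in>I. X (F i) z)"
proof (induction I rule: infinite_finite_induct)
  case (insert i I)
  have "(\<lambda>z. \<Sum>i\<in>I. F i z) \<in> H" using insert.prems by (intro source.sum_mem) auto
  then have "X (\<lambda>z. F i z + (\<Sum>i\<in>I. F i z)) = (\<lambda>z. X (F i) z + X (\<lambda>z. \<Sum>i\<in>I. F i z) z)"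
    using X_comb[of "F i" _ 1] insert.prems by simp
  with insert show ?case by simp
qed (simp_all add: X_zero)

lemma X_eval_A_tensor:
  assumes "A \<in> A_tensor \<Omega>"
  shows "X A w = (\<Sum>j\<in>UNIV. A w $ j *s X (unit_section \<Omega> j) w)"
proof -
  have comp: "(\<lambda>z. A z $ j) \<in> A_alg \<Omega>" for j using assms unfolding A_tensor_def by blast
  have "A = (\<lambda>w. \<Sum>j\<in>UNIV. mult (\<lambda>z. A z $ j) (unit_section \<Omega> j) w)"
    using A_tensor_expansion[OF assms] by (simp add: mult_def fun_eq_iff)
  then have "X A = X (\<lambda>w. \<Sum>j\<in>UNIV. mult (\<lambda>z. A z $ j) (unit_section \<Omega> j) w)"
    by (rule arg_cong)
  also have "\<dots> = (\<lambda>w. \<Sum>j\<in>UNIV. X (mult (\<lambda>z. A z $ j) (unit_section \<Omega> j)) w)"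
    by (rule X_sum) (rule source.mult_mem[OF comp source.unit_section_mem])
  also have "\<dots> = (\<lambda>w. \<Sum>j\<in>UNIV. mult (\<lambda>z. A z $ j) (X (unit_section \<Omega> j)) w)"
    using X_mult[OF comp source.unit_section_mem] by simp
  finally show ?thesis by (simp add: mult_def)
qed

lemma X_eval_bounded:
  assumes "z \<in> \<Omega>"
  obtains M where "\<And>F. F \<in> H \<Longrightarrow> norm (X F z) \<le> M * hnorm ip F"
proof -
  obtain C where C: "C \<ge> 0" "\<And>F. F \<in> H' \<Longrightarrow> norm (F z) \<le> C * hnorm ip' F"
    using target.eval_bounded[OF assms] by blast
  obtain B where B: "\<And>F. F \<in> H \<Longrightarrow> hnorm ip' (X F) \<le> B * hnorm ip F"
    using X_bounded by blast
  have "norm (X F z) \<le> (C * \<bar>B\<bar>) * hnorm ip F" if F: "F \<in> H" for F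
  proof -
    have "hnorm ip' (X F) \<le> \<bar>B\<bar> * hnorm ip F"
      using B[OF F] mult_right_mono[OF abs_ge_self source.hnorm_nonneg[OF F]] by (rule order_trans)
    then have "C * hnorm ip' (X F) \<le> C * (\<bar>B\<bar> * hnorm ip F)"
      using C(1) by (rule mult_left_mono)
    then show ?thesis using C(2)[OF X_mem[OF F]] by simp
  qed
  then show ?thesis by (rule that)
qed

lemma X_eval:
  assumes z: "z \<in> \<Omega>" and "h \<in> H"
  shows "X h z = (\<Sum>j\<in>UNIV. h z $ j *s X (unit_section \<Omega> j) z)"
proof -
  define L where "L F = X F z - (\<Sum>j\<in>UNIV. F z $ j *s X (unit_section \<Omega> j) z)" for F
  obtain M1 where M1: "\<And>F. F \<in> H \<Longrightarrow> norm (X F z) \<le> M1 * hnorm ip F"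
    using X_eval_bounded[OF z] by blast
  obtain M2 where M2: "\<And>F. F \<in> H \<Longrightarrow> norm (\<Sum>j\<in>UNIV. F z $ j *s X (unit_section \<Omega> j) z) \<le> M2 * hnorm ip F"
    using source.eval_combination_bounded[OF z, where v = "\<lambda>j. X (unit_section \<Omega> j) z"] by blast
  have "L h = 0"
  proof (rule source.eq_zero_if_approximable[where C = "M1 + M2"])
    show "L (\<lambda>z. F z - G z) = L F - L G" if "F \<in> H" "G \<in> H" for F G
      using X_diff[OF that] by (simp add: L_def vector_sub_rdistrib sum_subtractf algebra_simps)
    show "norm (L F) \<le> (M1 + M2) * hnorm ip F" if "F \<in> H" for F
      unfolding L_def distrib_right
      by (rule order_trans[OF norm_triangle_ineq4 add_mono[OF M1[OF that] M2[OF that]]])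
    show "\<exists>G\<in>H. L G = 0 \<and> hnorm ip (\<lambda>z. h z - G z) < e" if "e > 0" for e
    proof -
      obtain A where "A \<in> A_tensor \<Omega>" "hnorm ip (\<lambda>z. h z - A z) < e"
        using source.A_tensor_dense[OF \<open>h \<in> H\<close> \<open>e > 0\<close>] by blast
      then show ?thesis
        using source.A_tensor_subset X_eval_A_tensor by (auto simp: L_def)
    qed
  qed (use \<open>h \<in> H\<close> in simp)
  then show ?thesis by (simp add: L_def)
qed

lemma eval_image_eq_span:
  assumes z: "z \<in> \<Omega>"
  shows "(\<lambda>h. X h z) ` H = vec.span (range (\<lambda>j. X (unit_section \<Omega> j) z))"
proof
  show "(\<lambda>h. X h z) ` H \<subseteq> vec.span (range (\<lambda>j. X (unit_section \<Omega> j) z))"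
  proof
    fix x assume "x \<in> (\<lambda>h. X h z) ` H"
    then obtain h where "h \<in> H" "x = (\<Sum>j\<in>UNIV. h z $ j *s X (unit_section \<Omega> j) z)"
      using X_eval[OF z] by blast
    then show "x \<in> vec.span (range (\<lambda>j. X (unit_section \<Omega> j) z))"
      by (simp add: vec.span_sum vec.span_scale vec.span_base)
  qed
  have "vec.subspace ((\<lambda>h. X h z) ` H)"
    unfolding vec.subspace_def
  proof (intro conjI ballI allI)
    show "0 \<in> (\<lambda>h. X h z) ` H"
      by (rule image_eqI[of _ _ "\<lambda>z. 0"]) (simp_all add: X_zero source.zero_mem)
  next
    fix x y assume "x \<in> (\<lambda>h. X h z) ` H" "y \<in> (\<lambda>h. X h z) ` H"
    then obtain F G where FG: "F \<in> H" "G \<in> H" "x = X F z" "y = X G z" by blast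
    then have "x + y = X (\<lambda>w. F w + G w) z" using X_comb[OF FG(1,2), of 1] by simp
    then show "x + y \<in> (\<lambda>h. X h z) ` H" using source.add_mem[OF FG(1,2)] by blast
  next
    fix c x assume "x \<in> (\<lambda>h. X h z) ` H"
    then obtain F where F: "F \<in> H" "x = X F z" by blast
    then have "c *s x = X (\<lambda>w. c *s F w) z"
      using X_comb[OF F(1) source.zero_mem, of c] X_zero by simp
    then show "c *s x \<in> (\<lambda>h. X h z) ` H" using source.scale_mem[OF F(1)] by blast
  qed
  moreover have "range (\<lambda>j. X (unit_section \<Omega> j) z) \<subseteq> (\<lambda>h. X h z) ` H"
    using source.unit_section_mem by auto
  ultimately show "vec.span (range (\<lambda>j. X (unit_section \<Omega> j) z)) \<subseteq> (\<lambda>h. X h z) ` H"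
    by (rule vec.span_minimal[rotated])
qed

lemma independent_mod_loc_sub_iff:
  assumes z: "z \<in> \<Omega>" and h: "\<forall>i<k. h i \<in> H"
  shows "(\<forall>c. (\<lambda>w. \<Sum>i<k. c i *s X (h i) w) \<in> loc_sub \<Omega> H' ip' z \<longrightarrow> (\<forall>i<k. c i = 0))
      \<longleftrightarrow> independent_family {..<k} (\<lambda>i. X (h i) z)"
proof -
  have "(\<lambda>w. \<Sum>i<k. c i *s X (h i) w) \<in> H'" for c
    using h by (intro target.sum_mem target.scale_mem X_mem) auto
  then show ?thesis
    using target.loc_sub_iff[OF z] by (simp add: independent_family_def Ball_def)
qed

lemma loc_rank_eq_dim:
  assumes z: "z \<in> \<Omega>"
  shows "loc_rank \<Omega> H H' ip' X z = vec.dim (range (\<lambda>j. X (unit_section \<Omega> j) z))"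
proof -
  let ?V = "range (\<lambda>j. X (unit_section \<Omega> j) z)"
  have lift: "(\<exists>h. (\<forall>i<k. h i \<in> H) \<and> independent_family {..<k} (\<lambda>i. X (h i) z))
      \<longleftrightarrow> (\<exists>u. (\<forall>i<k. u i \<in> vec.span ?V) \<and> independent_family {..<k} u)" for k :: nat
  proof
    assume "\<exists>h. (\<forall>i<k. h i \<in> H) \<and> independent_family {..<k} (\<lambda>i. X (h i) z)"
    then obtain h where "\<forall>i<k. h i \<in> H" "independent_family {..<k} (\<lambda>i. X (h i) z)" by blast
    then show "\<exists>u. (\<forall>i<k. u i \<in> vec.span ?V) \<and> independent_family {..<k} u"
      using eval_image_eq_span[OF z] by (intro exI[of _ "\<lambda>i. X (h i) z"]) blast
  next
    assume "\<exists>u. (\<forall>i<k. u i \<in> vec.span ?V) \<and> independent_family {..<k} u"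
    then obtain u where u: "\<forall>i<k. u i \<in> vec.span ?V" "independent_family {..<k} u"
      by blast
    define h where "h i = (SOME h. h \<in> H \<and> u i = X h z)" for i
    have "h i \<in> H \<and> u i = X (h i) z" if "i < k" for i
    proof -
      have "u i \<in> (\<lambda>h. X h z) ` H" using u(1) that unfolding eval_image_eq_span[OF z] by blast
      then have "\<exists>g. g \<in> H \<and> u i = X g z" by blast
      from someI_ex[OF this] show ?thesis unfolding h_def .
    qed
    then show "\<exists>h. (\<forall>i<k. h i \<in> H) \<and> independent_family {..<k} (\<lambda>i. X (h i) z)"
      using u(2) by (intro exI[of _ h]) (simp add: independent_family_def Ball_def)
  qed
  have "(\<exists>h. (\<forall>i<k. h i \<in> H) \<and>
          (\<forall>c. (\<lambda>w. \<Sum>i<k. c i *s X (h i) w) \<in> loc_sub \<Omega> H' ip' z \<longrightarrow> (\<forall>i<k. c i = 0)))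
      \<longleftrightarrow> (\<exists>u. (\<forall>i<k. u i \<in> vec.span ?V) \<and> independent_family {..<k} u)" for k :: nat
    unfolding lift[symmetric] using independent_mod_loc_sub_iff[OF z] by blast
  then show ?thesis
    unfolding loc_rank_def Greatest_independent_family_eq_dim[of ?V, symmetric] by simp
qed

lemma holo_on_det_completed:
  assumes "open \<Omega>"
  shows "holo_on (\<lambda>w. det (completed_matrix (\<lambda>j. X (unit_section \<Omega> j) w) s)) \<Omega>"
proof (rule holo_on_det)
  fix r a
  show "holo_on (\<lambda>w. completed_matrix (\<lambda>j. X (unit_section \<Omega> j) w) s $ r $ a) \<Omega>"
  proof (cases "s r")
    case (Some j)
    then show ?thesis
      using target.component_holo[OF assms X_mem[OF source.unit_section_mem]]
      by (simp add: completed_matrix_def)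
  qed (simp add: completed_matrix_def)
qed

end

section \<open>Rank level sets\<close>

lemma rank_locally_ge:
  fixes r :: "complex^'n \<Rightarrow> nat" and f :: "'s \<Rightarrow> complex^'n \<Rightarrow> complex"
  assumes "open \<Omega>" and holo: "\<And>s. holo_on (f s) \<Omega>"
    and rank: "\<And>z k. z \<in> \<Omega> \<Longrightarrow> k < r z \<longleftrightarrow> (\<exists>s\<in>S k. f s z \<noteq> 0)"
    and p: "p \<in> \<Omega>"
  obtains U where "open U" "p \<in> U" "U \<subseteq> \<Omega>" "\<And>w. w \<in> U \<Longrightarrow> r p \<le> r w"
proof (cases "r p")
  case 0
  then have "r p \<le> r w" for w by simp
  then show ?thesis by (rule that[OF assms(1) p subset_refl])
next
  case (Suc k)
  then have "\<exists>s\<in>S k. f s p \<noteq> 0" using rank[OF p, of k] by simp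
  then obtain s where s: "s \<in> S k" "f s p \<noteq> 0" by blast
  define U where "U = \<Omega> \<inter> f s -` (- {0})"
  have "open U"
    unfolding U_def by (rule continuous_open_preimage[OF holo_on_continuous_on[OF holo] assms(1)]) auto
  moreover have "p \<in> U" using p s(2) by (simp add: U_def)
  moreover have "r p \<le> r w" if "w \<in> U" for w
  proof -
    have "w \<in> \<Omega>" "f s w \<noteq> 0" using that by (auto simp: U_def)
    then show ?thesis using rank[of w k] s(1) Suc by auto
  qed
  ultimately show ?thesis using that by (auto simp: U_def)
qed

lemma analytic_subvariety_rank_level_set:
  fixes r :: "complex^'n \<Rightarrow> nat" and f :: "'s \<Rightarrow> complex^'n \<Rightarrow> complex"
  assumes "open \<Omega>" and holo: "\<And>s. holo_on (f s) \<Omega>" and fin: "\<And>k. finite (S k)"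
    and rank: "\<And>z k. z \<in> \<Omega> \<Longrightarrow> k < r z \<longleftrightarrow> (\<exists>s\<in>S k. f s z \<noteq> 0)"
  shows "analytic_subvariety \<Omega> {z\<in>\<Omega>. r z = k}"
  unfolding analytic_subvariety_def
proof (intro conjI ballI)
  fix p assume "p \<in> {z\<in>\<Omega>. r z = k}"
  then have p: "p \<in> \<Omega>" "r p = k" by auto
  obtain U where U: "open U" "p \<in> U" "U \<subseteq> \<Omega>" "\<And>w. w \<in> U \<Longrightarrow> k \<le> r w"
    using rank_locally_ge[OF assms(1) holo rank p(1)] p(2) by metis
  obtain N g where N: "S k = g ` {i. i < (N::nat)}"
    using finite_imp_nat_seg_image_inj_on[OF fin] by blast
  have "{z\<in>\<Omega>. r z = k} \<inter> U = {w\<in>U. \<forall>i<N. f (g i) w = 0}"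
  proof (intro set_eqI iffI)
    fix w assume "w \<in> {z\<in>\<Omega>. r z = k} \<inter> U"
    then show "w \<in> {w\<in>U. \<forall>i<N. f (g i) w = 0}" using rank[of w k] N by auto
  next
    fix w assume w: "w \<in> {w\<in>U. \<forall>i<N. f (g i) w = 0}"
    then have "\<not> k < r w" using rank[of w k] N U(3) by auto
    then show "w \<in> {z\<in>\<Omega>. r z = k} \<inter> U" using w U(3,4) by fastforce
  qed
  moreover have "\<forall>i<N. holo_on (f (g i)) U" using holo holo_on_subset U(3) by blast
  ultimately have "\<exists>(N::nat) f. (\<forall>i<N. holo_on (f i) U) \<and> {z\<in>\<Omega>. r z = k} \<inter> U = {w\<in>U. \<forall>i<N. f i w = 0}"
    by (intro exI[of _ N] exI[of _ "\<lambda>i. f (g i)"]) simp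
  then show "\<exists>U. open U \<and> p \<in> U \<and> U \<subseteq> \<Omega> \<and> (\<exists>(N::nat) f. (\<forall>i<N. holo_on (f i) U) \<and>
      {z\<in>\<Omega>. r z = k} \<inter> U = {w\<in>U. \<forall>i<N. f i w = 0})"
    using U(1-3) by blast
qed auto

theorem theorem1:
  fixes \<Omega> :: "(complex^'n) set"
    and H :: "(complex^'n \<Rightarrow> complex^'m) set"
    and ip :: "(complex^'n \<Rightarrow> complex^'m) \<Rightarrow> (complex^'n \<Rightarrow> complex^'m) \<Rightarrow> complex"
    and H' :: "(complex^'n \<Rightarrow> complex^'p) set"
    and ip' :: "(complex^'n \<Rightarrow> complex^'p) \<Rightarrow> (complex^'n \<Rightarrow> complex^'p) \<Rightarrow> complex"
    and X :: "(complex^'n \<Rightarrow> complex^'m) \<Rightarrow> (complex^'n \<Rightarrow> complex^'p)"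
  assumes "bounded_domain \<Omega>"
    and "quasi_free \<Omega> H ip"
    and "quasi_free \<Omega> H' ip'"
    and "module_map \<Omega> H ip H' ip' X"
  shows "\<forall>k::nat. analytic_subvariety \<Omega> {z\<in>\<Omega>. loc_rank \<Omega> H H' ip' X z = k}"
proof
  fix k :: nat
  interpret quasi_free_module_map \<Omega> H ip H' ip' X
    by unfold_locales (fact assms)+
  have "open \<Omega>" using assms(1) by (simp add: bounded_domain_def)
  show "analytic_subvariety \<Omega> {z\<in>\<Omega>. loc_rank \<Omega> H H' ip' X z = k}"
  proof (rule analytic_subvariety_rank_level_set[where S = "\<lambda>k. {s. k < card {r. s r \<noteq> None}}"])
    show "holo_on (\<lambda>w. det (completed_matrix (\<lambda>j. X (unit_section \<Omega> j) w) s)) \<Omega>" for s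
      using holo_on_det_completed[OF \<open>open \<Omega>\<close>] .
    show "k < loc_rank \<Omega> H H' ip' X z \<longleftrightarrow>
        (\<exists>s\<in>{s. k < card {r. s r \<noteq> None}}. det (completed_matrix (\<lambda>j. X (unit_section \<Omega> j) z) s) \<noteq> 0)"
      if "z \<in> \<Omega>" for z k
      using loc_rank_eq_dim[OF that] dim_range_gt_iff_completed_det by simp
  qed (use \<open>open \<Omega>\<close> in auto)
qed

end
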